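(* The diagonal spectral gap satisfies \[ \mathrm{gap}(\mathcal A)\ge\mu^2\Big(\sum_{k\ge0}\frac{\nu^{2k}}{k+r}\Big)^{-1}=\mu^2\nu^{2r}\Big(2\int_0^\nu\frac{s^{2r-1}}{1-s^2}\,ds\Big)^{-1}. \]
   Context: Fix $r>0$ and $0<\lambda<\mu$, put $\nu=\lambda/\mu$ and $\omega_n=n(n+r-1)$. Let $\mathcal A$ be the generator of the birth-and-death process on $\mathbb N$ acting as $(\mathcal Af)_j=\lambda^2\omega_{j+1}(f_{j+1}-f_j)+\mu^2\omega_j(f_{j-1}-f_j)$ (this is the action of the quadratic open quantum harmonic oscillator generator on diagonal operators $\sum_jf_j|e_j\rangle\langle e_j|$). Its invariant measure is $\pi_j=(1-\nu^2)\nu^{2j}$. The (diagonal) spectral gap is \[ \mathrm{gap}(\mathcal A)=\inf\Big\{\sum_{j\ge0}\lambda^2\omega_{j+1}|f_{j+1}-f_j|^2\pi_j:\ \sum_j\pi_j|f_j|^2=1,\ \sum_j\pi_jf_j=0\Big\}, \] which equals the infimum of the Dirichlet form $\mathcal E(\xi)=-\mathrm{Re}\langle\xi,L\xi\rangle$ over unit diagonal Hilbert–Schmidt operators $\xi=\sum_j\pi_j^{1/2}f_j|e_j\rangle\langle e_j|$ orthogonal to $\rho^{1/2}$, $\rho=\sum_j\pi_j|e_j\rangle\langle e_j|$. *)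

theory Defs
  imports "HOL-Analysis.Analysis"
begin

definition omega :: "real \<Rightarrow> nat \<Rightarrow> real" where
  "omega r n = real n * (real n + r - 1)"

definition inv_meas :: "real \<Rightarrow> real \<Rightarrow> nat \<Rightarrow> real" where
  "inv_meas lam mu j = (1 - (lam/mu)^2) * (lam/mu)^(2*j)"

definition admissible :: "real \<Rightarrow> real \<Rightarrow> (nat \<Rightarrow> complex) \<Rightarrow> bool" where
  "admissible lam mu f \<longleftrightarrow>
     summable (\<lambda>j. inv_meas lam mu j * (cmod (f j))^2) \<and>
     (\<Sum>j. inv_meas lam mu j * (cmod (f j))^2) = 1 \<and>
     summable (\<lambda>j. complex_of_real (inv_meas lam mu j) * f j) \<and>
     (\<Sum>j. complex_of_real (inv_meas lam mu j) * f j) = 0"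

definition dirichlet :: "real \<Rightarrow> real \<Rightarrow> real \<Rightarrow> (nat \<Rightarrow> complex) \<Rightarrow> ennreal" where
  "dirichlet r lam mu f =
     (\<Sum>j. ennreal (lam^2 * omega r (Suc j) * (cmod (f (Suc j) - f j))^2 * inv_meas lam mu j))"

definition diag_gap :: "real \<Rightarrow> real \<Rightarrow> real \<Rightarrow> ennreal" where
  "diag_gap r lam mu = (INF f \<in> {f. admissible lam mu f}. dirichlet r lam mu f)"

end

theory Submission
  imports Defs
begin

text \<open>
  Put x = \<nu>^2, so that \<pi>_j = (1 - x) x^j, and let \<Phi>(x, r) = \<Sum>_k x^k / (k + r).
  For an admissible f the pair variance \<Sum>_{i,k} \<pi>_i \<pi>_k |f_i - f_k|^2 equals 2.
  Telescoping f_k - f_i and applying Cauchy-Schwarz with the increasing weights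
  W_k = -1 / (k + r) gives |f_k - f_i|^2 \<le> (W_k - W_i) \<Sum>_{i \<le> j < k} |f_{j+1} - f_j|^2 / (W_{j+1} - W_j).
  After exchanging the order of summation, the coefficient of |f_{j+1} - f_j|^2 is governed by
  \<Sum>_{i \<le> j < k} \<pi>_i \<pi>_k (W_k - W_i) \<le> (1 - x) x^{j+1} \<Phi>(x, r) (j + 1) / (j + 1 + r),
  a geometric computation combined with the monotonicity of a \<mapsto> a \<Phi>(x, a).
  Divided by W_{j+1} - W_j this is \<Phi>(x, r) / \<mu>^2 times the Dirichlet weight \<lambda>^2 \<omega>_{j+1} \<pi>_j,
  so 2 \<le> 2 \<Phi>(x, r) E(f) / \<mu>^2 for the Dirichlet form E. The integral form follows by
  expanding 1 / (1 - s^2) as a geometric series.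
\<close>

lemma sq_norm_diff_le_weighted_increments:
  fixes f :: "nat \<Rightarrow> 'a::real_normed_vector" and W :: "nat \<Rightarrow> real"
  assumes W: "\<And>j. W j < W (Suc j)" and "i \<le> k"
  shows "(norm (f k - f i))\<^sup>2 \<le>
           (W k - W i) * (\<Sum>j\<in>{i..<k}. (norm (f (Suc j) - f j))\<^sup>2 / (W (Suc j) - W j))"
proof -
  define u where "u j = W (Suc j) - W j" for j
  have u: "u j > 0" for j using W[of j] by (simp add: u_def)
  then have "u j \<noteq> 0" for j by (metis less_irrefl)
  then have "norm (f k - f i) \<le> (\<Sum>j\<in>{i..<k}. sqrt (u j) * (norm (f (Suc j) - f j) / sqrt (u j)))"
    using norm_sum[of "\<lambda>j. f (Suc j) - f j" "{i..<k}"]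
    by (simp add: sum_Suc_diff' \<open>i \<le> k\<close>)
  then have "(norm (f k - f i))\<^sup>2 \<le> (\<Sum>j\<in>{i..<k}. sqrt (u j) * (norm (f (Suc j) - f j) / sqrt (u j)))\<^sup>2"
    by (intro power_mono) auto
  also have "\<dots> \<le> (\<Sum>j\<in>{i..<k}. (sqrt (u j))\<^sup>2) * (\<Sum>j\<in>{i..<k}. (norm (f (Suc j) - f j) / sqrt (u j))\<^sup>2)"
    by (rule Cauchy_Schwarz_ineq_sum)
  also have "\<dots> = (W k - W i) * (\<Sum>j\<in>{i..<k}. (norm (f (Suc j) - f j))\<^sup>2 / (W (Suc j) - W j))"
    using u sum_Suc_diff'[OF \<open>i \<le> k\<close>, of W] by (simp add: u_def less_imp_le power_divide)
  finally show ?thesis .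
qed

lemma sum_pairs_sq_norm_diff:
  fixes f :: "'b \<Rightarrow> 'a::real_inner" and p :: "'b \<Rightarrow> real"
  shows "(\<Sum>i\<in>A. \<Sum>k\<in>A. p i * p k * (norm (f i - f k))\<^sup>2)
           = 2 * sum p A * (\<Sum>i\<in>A. p i * (norm (f i))\<^sup>2) - 2 * (norm (\<Sum>i\<in>A. p i *\<^sub>R f i))\<^sup>2"
proof -
  have sq: "(norm (f i - f k))\<^sup>2 = (norm (f i))\<^sup>2 + (norm (f k))\<^sup>2 - 2 * inner (f i) (f k)" for i k
    by (simp add: power2_norm_eq_inner inner_diff inner_commute)
  have "(\<Sum>i\<in>A. \<Sum>k\<in>A. p i * p k * (norm (f i - f k))\<^sup>2)
      = (\<Sum>k\<in>A. \<Sum>i\<in>A. p k * (p i * (norm (f i))\<^sup>2)) + (\<Sum>i\<in>A. \<Sum>k\<in>A. p i * (p k * (norm (f k))\<^sup>2))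
        - 2 * (\<Sum>i\<in>A. \<Sum>k\<in>A. p i * p k * inner (f i) (f k))"
    by (subst (2) sum.swap) (simp add: sq algebra_simps sum.distrib sum_subtractf sum_distrib_left)
  also have "(\<Sum>i\<in>A. \<Sum>k\<in>A. p i * p k * inner (f i) (f k)) = (norm (\<Sum>i\<in>A. p i *\<^sub>R f i))\<^sup>2"
    by (simp add: power2_norm_eq_inner inner_sum_left inner_sum_right sum_distrib_left mult.assoc)
      (auto intro!: sum.cong simp: inner_commute)
  finally show ?thesis
    by (simp only: sum_product[symmetric])
qed

lemma sum_symmetric_pairs:
  fixes X :: "nat \<Rightarrow> nat \<Rightarrow> 'a::comm_ring_1"
  assumes "\<And>i k. X i k = X k i" and "\<And>i. X i i = 0"
  shows "(\<Sum>i\<le>N. \<Sum>k\<le>N. X i k) = 2 * (\<Sum>k\<le>N. \<Sum>i<k. X i k)"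
  by (induction N)
    (simp_all add: sum.distrib assms(2) assms(1)[of "Suc _"] lessThan_Suc_atMost[symmetric] algebra_simps)

lemma sum_triangle3_swap:
  fixes N :: nat
  shows "(\<Sum>k\<le>N. \<Sum>i<k. \<Sum>j\<in>{i..<k}. F i j k) = (\<Sum>j<N. \<Sum>i\<le>j. \<Sum>k\<in>{Suc j..N}. F i j k)"
proof -
  have "{j \<in> {..<k}. i \<le> j} = {i..<k}" for i k :: nat
    by auto
  then have "(\<Sum>k\<le>N. \<Sum>i<k. \<Sum>j\<in>{i..<k}. F i j k) = (\<Sum>k\<le>N. \<Sum>i<k. \<Sum>j<k. if i \<le> j then F i j k else 0)"
    by (simp add: sum.inter_filter[symmetric])
  also have "\<dots> = (\<Sum>k\<le>N. \<Sum>j<k. \<Sum>i<k. if i \<le> j then F i j k else 0)"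
    by (intro sum.cong refl sum.swap)
  also have "\<dots> = (\<Sum>k\<le>N. \<Sum>j<k. \<Sum>i\<le>j. F i j k)"
  proof -
    have "{i \<in> {..<k}. i \<le> j} = {..j}" if "j < k" for j k :: nat
      using that by auto
    then show ?thesis
      by (intro sum.cong[OF refl]) (simp add: sum.inter_filter[symmetric])
  qed
  also have "\<dots> = (\<Sum>j<N. \<Sum>k\<in>{Suc j..N}. \<Sum>i\<le>j. F i j k)"
    by (rule sum.nested_swap')
  also have "\<dots> = (\<Sum>j<N. \<Sum>i\<le>j. \<Sum>k\<in>{Suc j..N}. F i j k)"
    by (intro sum.cong refl sum.swap)
  finally show ?thesis .
qed

lemma sum_pairs_sq_norm_diff_le_energy:
  fixes f :: "nat \<Rightarrow> 'a::real_normed_vector" and p W b :: "nat \<Rightarrow> real"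
  assumes W: "\<And>j. W j < W (Suc j)" and p: "\<And>j. p j \<ge> 0"
    and b: "\<And>j N. (\<Sum>i\<le>j. \<Sum>k\<in>{Suc j..N}. p i * p k * (W k - W i)) \<le> b j * (W (Suc j) - W j)"
  shows "(\<Sum>i\<le>N. \<Sum>k\<le>N. p i * p k * (norm (f i - f k))\<^sup>2)
           \<le> 2 * (\<Sum>j<N. b j * (norm (f (Suc j) - f j))\<^sup>2)"
proof -
  define g where "g j = (norm (f (Suc j) - f j))\<^sup>2 / (W (Suc j) - W j)" for j
  have g: "g j \<ge> 0" for j using W[of j] by (simp add: g_def)
  have "(\<Sum>i\<le>N. \<Sum>k\<le>N. p i * p k * (norm (f i - f k))\<^sup>2)
      = 2 * (\<Sum>k\<le>N. \<Sum>i<k. p i * p k * (norm (f k - f i))\<^sup>2)"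
    by (subst sum_symmetric_pairs) (simp_all add: norm_minus_commute mult.commute)
  also have "\<dots> \<le> 2 * (\<Sum>k\<le>N. \<Sum>i<k. \<Sum>j\<in>{i..<k}. g j * (p i * p k * (W k - W i)))"
  proof (intro mult_left_mono sum_mono)
    fix k i :: nat assume "i \<in> {..<k}"
    then have "(norm (f k - f i))\<^sup>2 \<le> (W k - W i) * sum g {i..<k}"
      unfolding g_def by (intro sq_norm_diff_le_weighted_increments W) simp
    then show "p i * p k * (norm (f k - f i))\<^sup>2 \<le> (\<Sum>j\<in>{i..<k}. g j * (p i * p k * (W k - W i)))"
      using p by (simp add: mult_left_mono sum_distrib_right[symmetric] mult_ac)
  qed simp
  also have "\<dots> = 2 * (\<Sum>j<N. g j * (\<Sum>i\<le>j. \<Sum>k\<in>{Suc j..N}. p i * p k * (W k - W i)))"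
    by (simp only: sum_triangle3_swap sum_distrib_left)
  also have "\<dots> \<le> 2 * (\<Sum>j<N. g j * (b j * (W (Suc j) - W j)))"
    by (intro mult_left_mono sum_mono b g) simp
  also have "\<dots> = 2 * (\<Sum>j<N. b j * (norm (f (Suc j) - f j))\<^sup>2)"
    using W by (simp add: g_def less_imp_neq[symmetric] mult.commute)
  finally show ?thesis .
qed

lemma tendsto_sum_pairs_sq_norm_diff:
  fixes f :: "nat \<Rightarrow> 'a::real_inner" and p :: "nat \<Rightarrow> real"
  assumes "p sums P" and "(\<lambda>j. p j * (norm (f j))\<^sup>2) sums V" and "(\<lambda>j. p j *\<^sub>R f j) sums m"
  shows "(\<lambda>N. \<Sum>i\<le>N. \<Sum>k\<le>N. p i * p k * (norm (f i - f k))\<^sup>2) \<longlonglongrightarrow> 2 * P * V - 2 * (norm m)\<^sup>2"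
  using assms unfolding sums_def_le sum_pairs_sq_norm_diff by (intro tendsto_intros)

lemma poincare_of_pair_weight_bound:
  fixes f :: "nat \<Rightarrow> 'a::real_inner" and p W b :: "nat \<Rightarrow> real"
  assumes W: "\<And>j. W j < W (Suc j)" and p: "\<And>j. p j \<ge> 0" and b0: "\<And>j. b j \<ge> 0"
    and b: "\<And>j N. (\<Sum>i\<le>j. \<Sum>k\<in>{Suc j..N}. p i * p k * (W k - W i)) \<le> b j * (W (Suc j) - W j)"
    and "p sums 1" and "(\<lambda>j. p j * (norm (f j))\<^sup>2) sums 1" and "(\<lambda>j. p j *\<^sub>R f j) sums 0"
  shows "1 \<le> (\<Sum>j. ennreal (b j * (norm (f (Suc j) - f j))\<^sup>2))"
proof -
  define Q where "Q N = (\<Sum>i\<le>N. \<Sum>k\<le>N. p i * p k * (norm (f i - f k))\<^sup>2)" for N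
  define E where "E = (\<Sum>j. ennreal (b j * (norm (f (Suc j) - f j))\<^sup>2))"
  have "(\<lambda>N. ennreal (Q N)) \<longlonglongrightarrow> ennreal 2"
    using tendsto_sum_pairs_sq_norm_diff[OF assms(5-7)] unfolding Q_def by (intro tendsto_ennrealI) simp
  moreover have "ennreal (Q N) \<le> 2 * E" for N
  proof -
    have "ennreal (Q N) \<le> ennreal (2 * (\<Sum>j<N. b j * (norm (f (Suc j) - f j))\<^sup>2))"
      unfolding Q_def by (intro ennreal_leI sum_pairs_sq_norm_diff_le_energy[OF W p b])
    also have "\<dots> = 2 * (\<Sum>j<N. ennreal (b j * (norm (f (Suc j) - f j))\<^sup>2))"
      using b0 by (subst sum_ennreal) (auto simp: ennreal_mult'[of 2])
    also have "\<dots> \<le> 2 * E"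
      unfolding E_def by (intro mult_left_mono sum_le_suminf) auto
    finally show ?thesis .
  qed
  ultimately have "2 * 1 \<le> 2 * E"
    by (intro LIMSEQ_le_const2) auto
  then show ?thesis
    unfolding E_def by (subst (asm) ennreal_mult_le_mult_iff) auto
qed

definition lerch_phi :: "real \<Rightarrow> real \<Rightarrow> real" where
  "lerch_phi x a = (\<Sum>k. x^k / (real k + a))"

lemma summable_lerch_phi:
  assumes "0 \<le> x" "x < 1" "a > 0"
  shows "summable (\<lambda>k. x^k / (real k + a))"
proof (rule summable_comparison_test')
  show "summable (\<lambda>k. x^k / a)"
    using assms by (intro summable_divide summable_geometric) simp
  show "norm (x^k / (real k + a)) \<le> x^k / a" for k
    using assms by (simp add: divide_left_mono)
qed

lemma lerch_phi_pos:
  assumes "0 < x" "x < 1" "a > 0"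
  shows "lerch_phi x a > 0"
  unfolding lerch_phi_def using assms by (intro suminf_pos summable_lerch_phi) auto

lemma sums_lerch_phi_tail:
  assumes "0 \<le> x" "x < 1" "a > 0"
  shows "(\<lambda>m. x^(m + n) / (real (m + n) + a)) sums (x^n * lerch_phi x (a + real n))"
proof -
  have "(\<lambda>m. x^n * (x^m / (real m + (a + real n)))) sums (x^n * lerch_phi x (a + real n))"
    unfolding lerch_phi_def using assms by (intro sums_mult summable_sums summable_lerch_phi) auto
  then show ?thesis by (simp add: power_add add_ac mult.commute)
qed

lemma lerch_phi_split:
  assumes "0 \<le> x" "x < 1" "a > 0"
  shows "lerch_phi x a = (\<Sum>k<n. x^k / (real k + a)) + x^n * lerch_phi x (a + real n)"
  using suminf_split_initial_segment[OF summable_lerch_phi[OF assms], of n]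
    sums_unique[OF sums_lerch_phi_tail[OF assms, of n]]
  by (simp add: lerch_phi_def)

lemma mult_lerch_phi_mono:
  assumes "0 \<le> x" "x < 1" "0 < a" "a \<le> c"
  shows "a * lerch_phi x a \<le> c * lerch_phi x c"
proof -
  have sums: "(\<lambda>k. b * (x^k / (real k + b))) sums (b * lerch_phi x b)" if "b > 0" for b
    unfolding lerch_phi_def using assms that by (intro sums_mult summable_sums summable_lerch_phi) auto
  have "a * (real k + c) \<le> c * (real k + a)" for k
    using assms by (simp add: algebra_simps mult_right_mono)
  then have "x^k * (a * (real k + c)) \<le> x^k * (c * (real k + a))" for k
    using assms by (intro mult_left_mono) auto
  then have "a * (x^k / (real k + a)) \<le> c * (x^k / (real k + c))" for k
    using assms by (simp add: divide_simps mult_ac)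
  then show ?thesis
    using assms by (intro sums_le[OF _ sums sums]) auto
qed

lemma sum_atLeastAtMost_le_suminf_shift:
  fixes t :: "nat \<Rightarrow> real"
  assumes "summable (\<lambda>m. t (m + n))" and "\<And>k. n \<le> k \<Longrightarrow> t k \<ge> 0"
  shows "sum t {n..N} \<le> (\<Sum>m. t (m + n))"
proof -
  have "k \<in> (\<lambda>m. m + n) ` {..N}" if "k \<in> {n..N}" for k
    using that by (intro image_eqI[of _ _ "k - n"]) auto
  then have "{n..N} \<subseteq> (\<lambda>m. m + n) ` {..N}"
    by blast
  then have "sum t {n..N} \<le> sum t ((\<lambda>m. m + n) ` {..N})"
    using assms(2) by (intro sum_mono2) auto
  also have "\<dots> = (\<Sum>m\<le>N. t (m + n))"
    by (simp add: sum.reindex)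
  also have "\<dots> \<le> (\<Sum>m. t (m + n))"
    using assms by (intro sum_le_suminf) auto
  finally show ?thesis .
qed

lemma sum_geometric_tail_weight_le:
  fixes x r :: real and i j N :: nat
  assumes x: "0 < x" "x < 1" and r: "r > 0" and "i \<le> j"
  shows "(\<Sum>k\<in>{Suc j..N}. (1-x) * x^k * (1/(real i + r) - 1/(real k + r)))
           \<le> x^Suc j / (real i + r) - (1-x) * x^Suc j * lerch_phi x (r + real (Suc j))"
proof -
  define Q where "Q = x^Suc j"
  define T where "T = lerch_phi x (r + real (Suc j))"
  define t where "t k = (1-x) * x^k * (1/(real i + r) - 1/(real k + r))" for k
  have "(\<lambda>m. x^(m + Suc j)) sums (Q / (1-x))"
    using sums_mult2[OF geometric_sums[of x], of "x^Suc j"] x by (simp add: Q_def power_add mult_ac)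
  moreover have "(\<lambda>m. x^(m + Suc j) / (real (m + Suc j) + r)) sums (Q * T)"
    unfolding Q_def T_def using x r by (intro sums_lerch_phi_tail) auto
  ultimately have "(\<lambda>m. (1-x) * (x^(m + Suc j) / (real i + r)) - (1-x) * (x^(m + Suc j) / (real (m + Suc j) + r)))
               sums ((1-x) * (Q / (1-x) / (real i + r)) - (1-x) * (Q * T))"
    by (intro sums_diff sums_mult sums_divide)
  moreover have "(1-x) * (Q / (1-x) / (real i + r)) - (1-x) * (Q * T) = Q / (real i + r) - (1-x) * Q * T"
    using x by simp
  ultimately have "(\<lambda>m. t (m + Suc j)) sums (Q / (real i + r) - (1-x) * Q * T)"
    by (simp add: t_def right_diff_distrib mult.assoc)
  moreover have "t k \<ge> 0" if "Suc j \<le> k" for k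
    using that \<open>i \<le> j\<close> r x by (simp add: t_def frac_le)
  ultimately show ?thesis
    using sum_atLeastAtMost_le_suminf_shift[of t "Suc j" N] by (simp add: t_def Q_def T_def sums_iff)
qed

lemma geometric_pair_weight_bound:
  fixes x r :: real and j N :: nat
  assumes x: "0 < x" "x < 1" and r: "r > 0"
  shows "(\<Sum>i\<le>j. \<Sum>k\<in>{Suc j..N}. ((1-x) * x^i) * ((1-x) * x^k) * (1/(real i + r) - 1/(real k + r)))
           \<le> lerch_phi x r * (1-x) * x^Suc j * omega r (Suc j) * (1/(real j + r) - 1/(real (Suc j) + r))"
proof -
  define Q where "Q = x^Suc j"
  define T where "T = lerch_phi x (r + real (Suc j))"
  define H where "H = (\<Sum>i<Suc j. x^i / (real i + r))"
  have "(\<Sum>i\<le>j. \<Sum>k\<in>{Suc j..N}. ((1-x) * x^i) * ((1-x) * x^k) * (1/(real i + r) - 1/(real k + r)))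
      = (\<Sum>i\<le>j. (1-x) * x^i * (\<Sum>k\<in>{Suc j..N}. (1-x) * x^k * (1/(real i + r) - 1/(real k + r))))"
    by (simp add: sum_distrib_left mult_ac)
  also have "\<dots> \<le> (\<Sum>i\<le>j. (1-x) * x^i * (Q / (real i + r) - (1-x) * Q * T))"
    unfolding Q_def T_def using x r sum_geometric_tail_weight_le
    by (intro sum_mono mult_left_mono) auto
  also have "\<dots> = (1-x) * Q * H - (1-x) * Q * T * ((1-x) * (\<Sum>i<Suc j. x^i))"
    unfolding H_def lessThan_Suc_atMost sum_distrib_left sum_subtractf[symmetric]
    by (intro sum.cong refl) (simp add: algebra_simps diff_divide_distrib)
  also have "\<dots> = (1-x) * Q * (H - (1 - Q) * T)"
    unfolding Q_def one_diff_power_eq[symmetric] by (simp add: algebra_simps)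
  also have "\<dots> = (1-x) * Q * (lerch_phi x r - T)"
    unfolding H_def Q_def T_def using lerch_phi_split[of x r "Suc j"] x r by (simp add: algebra_simps)
  also have "\<dots> \<le> (1-x) * Q * (lerch_phi x r * (real j + 1) / (real j + 1 + r))"
  proof -
    have "r * lerch_phi x r \<le> (r + real (Suc j)) * T"
      unfolding T_def using x r by (intro mult_lerch_phi_mono) auto
    then have "lerch_phi x r - T \<le> lerch_phi x r * (real j + 1) / (real j + 1 + r)"
      using r by (simp add: field_simps)
    then show ?thesis
      using x by (intro mult_left_mono) (auto simp: Q_def)
  qed
  also have "\<dots> = lerch_phi x r * (1-x) * x^Suc j * omega r (Suc j) * (1/(real j + r) - 1/(real (Suc j) + r))"
  proof -
    have "1/(real j + r) - 1/(real (Suc j) + r) = 1 / ((real j + r) * (real j + 1 + r))"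
      using r by (simp add: field_simps)
    moreover have "omega r (Suc j) = (real j + r) * (real j + 1)"
      by (simp add: omega_def algebra_simps)
    ultimately have "omega r (Suc j) * (1/(real j + r) - 1/(real (Suc j) + r)) = (real j + 1) / (real j + 1 + r)"
      using r by simp
    then show ?thesis
      by (simp add: Q_def mult_ac)
  qed
  finally show ?thesis .
qed

lemma sums_powr_mult_geometric_sq:
  fixes r s :: real
  assumes "0 \<le> s" "s < 1"
  shows "(\<lambda>k. s powr (2*r - 1 + 2 * real k)) sums (s powr (2*r - 1) / (1 - s\<^sup>2))"
proof (cases "s = 0")
  case False
  have "(\<lambda>k. s powr (2*r - 1) * (s\<^sup>2)^k) sums (s powr (2*r - 1) * (1 / (1 - s\<^sup>2)))"
    using assms by (intro sums_mult geometric_sums) (simp add: abs_square_less_1)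
  moreover have "s powr (2*r - 1 + 2 * real k) = s powr (2*r - 1) * (s\<^sup>2)^k" for k
    using False assms powr_realpow[of s "2*k"] by (simp add: powr_add flip: power_mult)
  ultimately show ?thesis by simp
qed simp

lemma integral_powr_div_one_minus_sq:
  fixes r v :: real
  assumes r: "r > 0" and v: "0 < v" "v < 1"
  shows "integral {0..v} (\<lambda>s. s powr (2*r - 1) / (1 - s\<^sup>2)) = v powr (2*r) * lerch_phi (v\<^sup>2) r / 2"
proof -
  define F where "F N s = (\<Sum>k<N. s powr (2*r - 1 + 2 * real k))" for N s
  define c where "c k = v powr (2*r) * ((v\<^sup>2)^k / (real k + r)) / 2" for k
  have "((\<lambda>s. s powr (2*r - 1 + 2 * real k)) has_integral c k) {0..v}" for k
  proof -
    have "v powr (2*r - 1 + 2 * real k + 1) / (2*r - 1 + 2 * real k + 1) = c k"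
      using r v powr_realpow[of v "2*k"] by (simp add: c_def powr_add field_simps flip: power_mult)
    then show ?thesis
      using has_integral_powr_from_0[of "2*r - 1 + 2 * real k" v] r v by simp
  qed
  then have F_int: "(F N has_integral (\<Sum>k<N. c k)) {0..v}" for N
    unfolding F_def by (intro has_integral_sum) auto
  have "c sums (v powr (2*r) * lerch_phi (v\<^sup>2) r / 2)"
    unfolding c_def lerch_phi_def using r v
    by (intro sums_divide sums_mult summable_sums summable_lerch_phi) (auto simp: power_less_one_iff)
  then have lim: "(\<lambda>N. integral {0..v} (F N)) \<longlonglongrightarrow> v powr (2*r) * lerch_phi (v\<^sup>2) r / 2"
    using F_int[THEN integral_unique] by (simp add: sums_def)
  have "(\<lambda>s. s powr (2*r - 1) / (1 - s\<^sup>2)) integrable_on {0..v} \<and>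
        (\<lambda>N. integral {0..v} (F N)) \<longlonglongrightarrow> integral {0..v} (\<lambda>s. s powr (2*r - 1) / (1 - s\<^sup>2))"
  proof (rule monotone_convergence_increasing)
    show "F N integrable_on {0..v}" for N using F_int by blast
    show "F N s \<le> F (Suc N) s" for N s by (simp add: F_def)
    show "(\<lambda>N. F N s) \<longlonglongrightarrow> s powr (2*r - 1) / (1 - s\<^sup>2)" if "s \<in> {0..v}" for s
      using sums_powr_mult_geometric_sq[of s r] that v unfolding F_def sums_def by simp
    show "bounded (range (\<lambda>N. integral {0..v} (F N)))"
      using lim by (intro convergent_imp_bounded) (auto simp: convergent_def)
  qed
  then show ?thesis
    using lim LIMSEQ_unique by blast
qed

lemma dirichlet_ge_of_admissible:
  assumes r: "r > 0" and lam: "0 < lam" "lam < mu" and f: "admissible lam mu f"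
  shows "ennreal (mu\<^sup>2 / lerch_phi ((lam/mu)\<^sup>2) r) \<le> dirichlet r lam mu f"
proof -
  define x where "x = (lam/mu)\<^sup>2"
  define S where "S = lerch_phi x r"
  define p where "p j = (1-x) * x^j" for j
  define W where "W k = -1/(real k + r)" for k
  define b where "b j = S * (1-x) * x^Suc j * omega r (Suc j)" for j
  have mu: "mu > 0" using lam by simp
  have x: "0 < x" "x < 1"
    using lam by (simp_all add: x_def power_less_one_iff)
  have S: "S > 0"
    unfolding S_def using x r by (rule lerch_phi_pos)
  have W: "W j < W (Suc j)" for j
    using r by (simp add: W_def field_simps)
  have p: "p j \<ge> 0" for j
    using x by (simp add: p_def)
  have b0: "b j \<ge> 0" for j
    using x r S by (simp add: b_def omega_def)
  have pair_weight: "(\<Sum>i\<le>j. \<Sum>k\<in>{Suc j..N}. p i * p k * (W k - W i)) \<le> b j * (W (Suc j) - W j)" for j N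
    using geometric_pair_weight_bound[OF x r, of j N] by (simp add: p_def W_def b_def S_def)
  have p_sums: "p sums 1"
    using sums_mult[OF geometric_sums[of x], of "1-x"] x by (simp add: p_def[abs_def])
  have pi: "inv_meas lam mu = p"
    by (simp add: fun_eq_iff inv_meas_def p_def x_def power_mult)
  then have "(\<lambda>j. p j * (norm (f j))\<^sup>2) sums 1" "(\<lambda>j. p j *\<^sub>R f j) sums 0"
    using f by (auto simp: admissible_def sums_iff scaleR_conv_of_real)
  then have one: "1 \<le> (\<Sum>j. ennreal (b j * (norm (f (Suc j) - f j))\<^sup>2))"
    using poincare_of_pair_weight_bound[of W p b, OF W p b0 pair_weight p_sums] by blast
  have "lam\<^sup>2 * omega r (Suc j) * (cmod (f (Suc j) - f j))\<^sup>2 * inv_meas lam mu j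
          = mu\<^sup>2 / S * (b j * (norm (f (Suc j) - f j))\<^sup>2)" for j
    using mu S by (simp add: pi p_def b_def x_def power_divide)
  then have "dirichlet r lam mu f = (\<Sum>j. ennreal (mu\<^sup>2 / S * (b j * (norm (f (Suc j) - f j))\<^sup>2)))"
    by (simp only: dirichlet_def)
  also have "\<dots> = ennreal (mu\<^sup>2 / S) * (\<Sum>j. ennreal (b j * (norm (f (Suc j) - f j))\<^sup>2))"
    using ennreal_mult'[of "mu\<^sup>2 / S"] S by simp
  also have "\<dots> \<ge> ennreal (mu\<^sup>2 / S)"
    using one by (metis mult.right_neutral mult_left_mono zero_le)
  finally show ?thesis
    by (simp add: S_def x_def)
qed

theorem theorem6p10:
  fixes r lam mu :: real
  assumes "r > 0" and "0 < lam" and "lam < mu"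
  defines "\<nu> \<equiv> lam / mu"
  shows "diag_gap r lam mu \<ge> ennreal (mu^2 / (\<Sum>k. \<nu>^(2*k) / (real k + r)))
    \<and> mu^2 / (\<Sum>k. \<nu>^(2*k) / (real k + r))
        = mu^2 * \<nu> powr (2*r) /
          (2 * integral {0..\<nu>} (\<lambda>s. s powr (2*r - 1) / (1 - s^2)))"
proof
  have \<nu>: "0 < \<nu>" "\<nu> < 1"
    using assms by (simp_all add: \<nu>_def)
  have series: "(\<Sum>k. \<nu>^(2*k) / (real k + r)) = lerch_phi (\<nu>\<^sup>2) r"
    by (simp add: lerch_phi_def power_mult)
  show "diag_gap r lam mu \<ge> ennreal (mu^2 / (\<Sum>k. \<nu>^(2*k) / (real k + r)))"
    using dirichlet_ge_of_admissible[OF assms(1-3)]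
    unfolding diag_gap_def series unfolding \<nu>_def by (auto intro!: INF_greatest)
  have "lerch_phi (\<nu>\<^sup>2) r > 0"
    using \<nu> assms by (intro lerch_phi_pos) (auto simp: power_less_one_iff)
  then show "mu^2 / (\<Sum>k. \<nu>^(2*k) / (real k + r))
        = mu^2 * \<nu> powr (2*r) / (2 * integral {0..\<nu>} (\<lambda>s. s powr (2*r - 1) / (1 - s^2)))"
    using \<nu> assms(1) by (simp add: series integral_powr_div_one_minus_sq)
qed

end
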